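(* Let $\alpha,\beta,\mu$ be real parameters with $0<\alpha\leq 1$, $\beta>0$, $0<\mu\leq 1$ and $\beta\neq\mu$. Define $W_0:\mathbb{R}^2_+\to\mathbb{R}^2_+$ by $$W_0(x,y)=\left(\beta y-\frac{\alpha x}{1+x}+x,\ \frac{\alpha x}{1+x}-\mu y+y\right).$$ Then for every integer $p\geq 2$, $W_0$ has no point of prime period $p$ in $\mathbb{R}^2_+$; i.e., every $z\in\mathbb{R}^2_+$ with $W_0^p(z)=z$ for some $p\geq 1$ is a fixed point of $W_0$.
   Context: $\mathbb{R}^2_+=\{(x,y)\in\mathbb{R}^2: x\geq 0,\ y\geq 0\}$; under the stated conditions $W_0$ maps $\mathbb{R}^2_+$ into itself. $W_0^p$ denotes the $p$-th iterate. A point $z$ is periodic if $W_0^p(z)=z$ for some $p\geq1$; the smallest such $p$ is its prime (least) period. *)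

theory Defs
  imports Complex_Main
begin

definition W0 :: "real \<Rightarrow> real \<Rightarrow> real \<Rightarrow> real \<times> real \<Rightarrow> real \<times> real" where
  "W0 \<alpha> \<beta> \<mu> z = (let x = fst z; y = snd z in
     (\<beta> * y - \<alpha> * x / (1 + x) + x, \<alpha> * x / (1 + x) - \<mu> * y + y))"

end

theory Submission
  imports Defs
begin

text \<open>The total mass x + y grows by (\<beta> - \<mu>) y in each step, so along a periodic orbit in the
  quadrant the nonnegative quantities y_k sum to zero and all vanish. But y_1 = \<alpha> x / (1 + x)
  when y_0 = 0, so also x = 0, and the only periodic point is the fixed point at the origin.\<close>

lemma W0_nonneg:
  assumes "0 \<le> \<alpha>" "\<alpha> \<le> 1" "0 \<le> \<beta>" "\<mu> \<le> 1" "0 \<le> fst z" "0 \<le> snd z"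
  shows "0 \<le> fst (W0 \<alpha> \<beta> \<mu> z) \<and> 0 \<le> snd (W0 \<alpha> \<beta> \<mu> z)"
proof -
  obtain x y where z: "z = (x, y)" by (cases z)
  with assms have x: "0 \<le> x" and y: "0 \<le> y" by auto
  have "x - \<alpha> * x / (1 + x) = x * (1 + x - \<alpha>) / (1 + x)"
    using x by (simp add: field_simps)
  also have "\<dots> \<ge> 0" using x assms by simp
  finally have "x - \<alpha> * x / (1 + x) \<ge> 0" .
  moreover have "\<alpha> * x / (1 + x) \<ge> 0" "\<beta> * y \<ge> 0" "y - \<mu> * y \<ge> 0"
    using x y assms mult_right_mono[of \<mu> 1 y] by simp_all
  ultimately show ?thesis by (simp add: z W0_def Let_def)
qed

lemma W0_funpow_nonneg:
  assumes "0 \<le> \<alpha>" "\<alpha> \<le> 1" "0 \<le> \<beta>" "\<mu> \<le> 1" "0 \<le> fst z" "0 \<le> snd z"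
  shows "0 \<le> fst ((W0 \<alpha> \<beta> \<mu> ^^ n) z) \<and> 0 \<le> snd ((W0 \<alpha> \<beta> \<mu> ^^ n) z)"
  by (induction n) (use assms W0_nonneg in auto)

lemma W0_mass_step:
  "fst (W0 \<alpha> \<beta> \<mu> z) + snd (W0 \<alpha> \<beta> \<mu> z) = fst z + snd z + (\<beta> - \<mu>) * snd z"
  by (simp add: W0_def Let_def algebra_simps)

lemma W0_funpow_mass:
  "fst ((W0 \<alpha> \<beta> \<mu> ^^ n) z) + snd ((W0 \<alpha> \<beta> \<mu> ^^ n) z)
     = fst z + snd z + (\<beta> - \<mu>) * (\<Sum>k<n. snd ((W0 \<alpha> \<beta> \<mu> ^^ k) z))"
  by (induction n) (simp_all add: W0_mass_step algebra_simps)

lemma W0_periodic_snd_eq_0: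
  assumes "0 \<le> \<alpha>" "\<alpha> \<le> 1" "0 \<le> \<beta>" "\<mu> \<le> 1" "\<beta> \<noteq> \<mu>" "0 \<le> fst z" "0 \<le> snd z"
    and "0 < p" "(W0 \<alpha> \<beta> \<mu> ^^ p) z = z" and "k \<le> p"
  shows "snd ((W0 \<alpha> \<beta> \<mu> ^^ k) z) = 0"
proof -
  let ?y = "\<lambda>k. snd ((W0 \<alpha> \<beta> \<mu> ^^ k) z)"
  have "(\<Sum>k<p. ?y k) = 0"
    using W0_funpow_mass[of p \<alpha> \<beta> \<mu> z] assms(5,9) by simp
  then have vanish: "?y k = 0" if "k < p" for k
    using that W0_funpow_nonneg[OF assms(1-4,6,7)] by (simp add: sum_nonneg_eq_0_iff)
  show ?thesis
  proof (cases "k < p")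
    case False
    with \<open>k \<le> p\<close> have "k = p" by simp
    with vanish[of 0] assms(8,9) show ?thesis by simp
  qed (rule vanish)
qed

lemma snd_W0_axis_eq_0_iff:
  assumes "0 < \<alpha>" "0 \<le> x"
  shows "snd (W0 \<alpha> \<beta> \<mu> (x, 0)) = 0 \<longleftrightarrow> x = 0"
  using assms by (simp add: W0_def Let_def add_nonneg_eq_0_iff)

theorem theorem2:
  fixes \<alpha> \<beta> \<mu> x y :: real and p :: nat
  assumes "0 < \<alpha>" "\<alpha> \<le> 1" "0 < \<beta>" "0 < \<mu>" "\<mu> \<le> 1" "\<beta> \<noteq> \<mu>"
    and "0 \<le> x" "0 \<le> y"
    and "p \<ge> 1"
    and "(W0 \<alpha> \<beta> \<mu> ^^ p) (x, y) = (x, y)"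
  shows "W0 \<alpha> \<beta> \<mu> (x, y) = (x, y)"
proof -
  have y_orbit: "snd ((W0 \<alpha> \<beta> \<mu> ^^ k) (x, y)) = 0" if "k \<le> p" for k
    by (rule W0_periodic_snd_eq_0[where p = p]) (use assms that in auto)
  from y_orbit[of 0] have "y = 0" by simp
  moreover from y_orbit[of 1] assms(9) have "snd (W0 \<alpha> \<beta> \<mu> (x, y)) = 0" by simp
  ultimately have "x = 0" using snd_W0_axis_eq_0_iff assms(1,7) by blast
  with \<open>y = 0\<close> show ?thesis by (simp add: W0_def)
qed

end
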